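(* Every connected door space $X$ satisfies OCC; that is, there do not exist pairwise disjoint nonempty subsets $A,B,C,D$ of $X$ such that $A$ and $B$ are open and $C$ and $D$ are closed.
   Context: A topological space $(X,\mathcal{T})$ is a connected door space if every proper nonempty subset of $X$ (i.e. every $A$ with $\varnothing\ne A\subsetneq X$) is either open or closed, but not both. A space satisfies OCC (the open-closed condition) if there are no pairwise disjoint nonempty subsets $A,B,C,D$ with $A,B$ open and $C,D$ closed. *)

theory Defs
  imports "HOL-Analysis.Analysis"
begin

definition connected_door_space :: "'a topology \<Rightarrow> bool" where
  "connected_door_space T \<longleftrightarrow>
     (\<forall>A. A \<noteq> {} \<and> A \<subset> topspace T \<longrightarrow>
          ((openin T A \<or> closedin T A) \<and> \<not> (openin T A \<and> closedin T A)))"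

definition OCC :: "'a topology \<Rightarrow> bool" where
  "OCC T \<longleftrightarrow> \<not> (\<exists>A B C D.
     A \<subseteq> topspace T \<and> B \<subseteq> topspace T \<and> C \<subseteq> topspace T \<and> D \<subseteq> topspace T \<and>
     A \<noteq> {} \<and> B \<noteq> {} \<and> C \<noteq> {} \<and> D \<noteq> {} \<and>
     A \<inter> B = {} \<and> A \<inter> C = {} \<and> A \<inter> D = {} \<and>
     B \<inter> C = {} \<and> B \<inter> D = {} \<and> C \<inter> D = {} \<and>
     openin T A \<and> openin T B \<and> closedin T C \<and> closedin T D)"

end

theory Submission
  imports Defs
begin

text \<open>In a door space a
  proper nonempty set is open exactly when it is not closed. If \<open>A \<union> C\<close> were closed, then
  either \<open>A \<union> D\<close> is open, making \<open>D = (A \<union> D) - (A \<union> C)\<close> open, or it is closed, making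
  \<open>A = (A \<union> C) \<inter> (A \<union> D)\<close> closed; both are impossible. So \<open>A \<union> C\<close>, and likewise \<open>B \<union> C\<close>,
  is open, hence so is \<open>C = (A \<union> C) \<inter> (B \<union> C)\<close>, a contradiction.\<close>

lemma connected_door_space_openin_iff_not_closedin:
  assumes "connected_door_space T" "S \<noteq> {}" "S \<subset> topspace T"
  shows "openin T S \<longleftrightarrow> \<not> closedin T S"
  using assms unfolding connected_door_space_def by blast

lemma connected_door_space_openin_Un_closedin:
  assumes door: "connected_door_space T"
    and A: "openin T A" "A \<noteq> {}"
    and C: "closedin T C"
    and D: "closedin T D" "D \<noteq> {}"
    and disj: "A \<inter> D = {}" "C \<inter> D = {}"
    and proper: "A \<union> C \<subset> topspace T" "A \<union> D \<subset> topspace T"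
  shows "openin T (A \<union> C)"
proof (rule ccontr)
  note open_iff = connected_door_space_openin_iff_not_closedin[OF door]
  assume "\<not> openin T (A \<union> C)"
  then have AC: "closedin T (A \<union> C)"
    using open_iff[of "A \<union> C"] proper A by blast
  show False
  proof (cases "openin T (A \<union> D)")
    case True
    have "(A \<union> D) - (A \<union> C) = D" using disj by blast
    then have "openin T D" using openin_diff[OF True AC] by simp
    then show False using open_iff[of D] D proper by blast
  next
    case False
    then have "closedin T (A \<union> D)" using open_iff[of "A \<union> D"] proper A by blast
    moreover have "(A \<union> C) \<inter> (A \<union> D) = A" using disj by blast
    ultimately have "closedin T A" using closedin_Int[OF AC] by metis
    then show False using open_iff[of A] A proper by blast
  qed
qed

theorem lemma2:
  fixes T :: "'a topology"
  assumes "connected_door_space T"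
  shows "OCC T"
  unfolding OCC_def
proof clarify
  fix A B C D
  assume sub: "A \<subseteq> topspace T" "B \<subseteq> topspace T" "C \<subseteq> topspace T" "D \<subseteq> topspace T"
    and ne: "A \<noteq> {}" "B \<noteq> {}" "C \<noteq> {}" "D \<noteq> {}"
    and disj: "A \<inter> B = {}" "A \<inter> C = {}" "A \<inter> D = {}" "B \<inter> C = {}" "B \<inter> D = {}" "C \<inter> D = {}"
    and oc: "openin T A" "openin T B" "closedin T C" "closedin T D"
  have "openin T (A \<union> C)"
    by (rule connected_door_space_openin_Un_closedin[OF assms]) (use sub ne disj oc in auto)
  moreover have "openin T (B \<union> C)"
    by (rule connected_door_space_openin_Un_closedin[OF assms]) (use sub ne disj oc in auto)
  moreover have "(A \<union> C) \<inter> (B \<union> C) = C" using disj by blast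
  ultimately have "openin T C" by (metis openin_Int)
  moreover have "C \<subset> topspace T" using sub ne disj by blast
  ultimately show False
    using connected_door_space_openin_iff_not_closedin[OF assms] ne oc by blast
qed

end
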